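(* Let $d\le n$, $\gamma>1$, and $\lambda_1,\lambda_2>0$ with $\lambda_1+\lambda_2=1$. For every $v\in\mathbb R^d$ with $\|v\|_2\le1$ there exist $\mathbf X_1,\mathbf X_2\in\mathfrak X(\gamma)$ and $1$-sparse $\beta_1,\beta_2\in\mathbb R^d$ such that, with $\Sigma_k=\frac1n\mathbf X_k^\top\mathbf X_k$, 1. $\lambda_1\Sigma_1+\lambda_2\Sigma_2=I_d$, and 2. $\lambda_1\Sigma_1\beta_1+\lambda_2\Sigma_2\beta_2=v=\vartheta_{\boldsymbol\lambda}$, where $\vartheta_{\boldsymbol\lambda}=\arg\min_{\vartheta}\sum_{k=1}^2\lambda_k\|\mathbf X_k(\vartheta-\beta_k)\|_2^2$.
   Context: $\mathfrak X(\gamma)=\{\mathbf X\in\mathbb R^{n\times d}:\gamma^{-1}I_d\preceq n^{-1}\mathbf X^\top\mathbf X\preceq\gamma I_d\}$. A vector is $1$-sparse if it has at most one nonzero entry. *)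

theory Defs
  imports "HOL-Analysis.Analysis"
begin

definition loewner_le :: "real^'d^'d \<Rightarrow> real^'d^'d \<Rightarrow> bool" where
  "loewner_le A B \<longleftrightarrow> (\<forall>x. x \<bullet> (A *v x) \<le> x \<bullet> (B *v x))"

definition sample_cov :: "real^'d^'n \<Rightarrow> real^'d^'d" where
  "sample_cov X = (1 / real CARD('n)) *\<^sub>R (transpose X ** X)"

definition design_class :: "real \<Rightarrow> (real^'d^'n) set" where
  "design_class \<gamma> = {X. loewner_le ((1/\<gamma>) *\<^sub>R mat 1) (sample_cov X)
                        \<and> loewner_le (sample_cov X) (\<gamma> *\<^sub>R mat 1)}"

definition one_sparse :: "real^'d \<Rightarrow> bool" where
  "one_sparse b \<longleftrightarrow> card {i. b $ i \<noteq> 0} \<le> 1"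

definition argmin_set :: "('a \<Rightarrow> real) \<Rightarrow> 'a set" where
  "argmin_set f = {x. \<forall>y. f x \<le> f y}"

end

theory Submission
  imports Defs
begin

text \<open>
  Whenever the pooled covariance \<open>\<lambda>\<^sub>1\<Sigma>\<^sub>1 + \<lambda>\<^sub>2\<Sigma>\<^sub>2\<close> is the identity, the pooled least-squares
  objective equals \<open>n \<parallel>\<theta> - m\<parallel>\<^sup>2\<close> plus a constant, where \<open>m = \<lambda>\<^sub>1\<Sigma>\<^sub>1\<beta>\<^sub>1 + \<lambda>\<^sub>2\<Sigma>\<^sub>2\<beta>\<^sub>2\<close>; so
  everything reduces to realising \<open>m = v\<close>. Fix a coordinate \<open>i\<close>, put \<open>e = axis i 1\<close> and
  \<open>u = v - (v\<^sub>i - 1) e\<close>, so that \<open>u \<bullet> e = 1\<close>. Take \<open>\<Sigma>\<^sub>k = I + a\<^sub>k u u\<^sup>T\<close> with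
  \<open>\<lambda>\<^sub>1 a\<^sub>1 + \<lambda>\<^sub>2 a\<^sub>2 = 0\<close> and \<open>a\<^sub>k\<close> small enough for \<open>\<Sigma>\<^sub>k\<close> to have spectrum in \<open>[1/\<gamma>, \<gamma>]\<close>;
  such \<open>\<Sigma>\<^sub>k\<close> are sample covariances of \<open>\<surd>n R (I + \<mu>\<^sub>k u u\<^sup>T)\<close>, \<open>R\<close> an isometric embedding
  of \<open>\<real>\<^sup>d\<close> into \<open>\<real>\<^sup>n\<close>. For \<open>\<beta>\<^sub>1 = b e\<close>, \<open>\<beta>\<^sub>2 = c e\<close> the pooled moment is
  \<open>(\<lambda>\<^sub>1 b + \<lambda>\<^sub>2 c) e + \<lambda>\<^sub>1 a\<^sub>1 (b - c) u\<close>, and \<open>b, c\<close> can be chosen to make it \<open>(v\<^sub>i - 1) e + u = v\<close>.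
\<close>

lemma one_sparse_scaleR_axis: "one_sparse (b *\<^sub>R axis i (1::real))"
proof -
  have "{j. (b *\<^sub>R axis i (1::real)) $ j \<noteq> 0} \<subseteq> {i}" by (auto simp: axis_def)
  then have "card {j. (b *\<^sub>R axis i (1::real)) $ j \<noteq> 0} \<le> card {i}"
    by (rule card_mono[rotated]) simp
  then show ?thesis by (simp add: one_sparse_def)
qed

lemma inner_matrix_vector_transpose:
  fixes A :: "real^'m^'n"
  shows "(A *v x) \<bullet> y = x \<bullet> (transpose A *v y)"
  by (metis dot_lmul_matrix inner_commute transpose_matrix_vector)

lemma transpose_sample_cov: "transpose (sample_cov X) = sample_cov X"
  by (simp add: sample_cov_def transpose_scalar matrix_transpose_mul)

lemma power2_norm_matrix_vector_sample_cov:
  fixes X :: "real^'d^'n"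
  shows "(norm (X *v z))\<^sup>2 = real CARD('n) * (z \<bullet> (sample_cov X *v z))"
  by (simp add: power2_norm_eq_inner inner_matrix_vector_transpose matrix_vector_mul_assoc
      sample_cov_def flip: scaleR_matrix_vector_assoc)

lemma pooled_least_squares_expansion:
  fixes X1 X2 :: "real^'d^'n" and l1 l2 :: real and \<beta>1 \<beta>2 :: "real^'d"
  defines "F \<equiv> \<lambda>\<theta>. l1 * (norm (X1 *v (\<theta> - \<beta>1)))\<^sup>2 + l2 * (norm (X2 *v (\<theta> - \<beta>2)))\<^sup>2"
  assumes "l1 *\<^sub>R sample_cov X1 + l2 *\<^sub>R sample_cov X2 = mat 1"
    and "l1 *\<^sub>R (sample_cov X1 *v \<beta>1) + l2 *\<^sub>R (sample_cov X2 *v \<beta>2) = v"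
  shows "F \<theta> = F v + real CARD('n) * (norm (\<theta> - v))\<^sup>2"
proof -
  define S1 S2 where "S1 = sample_cov X1" and "S2 = sample_cov X2"
  have quad: "(\<theta> - \<beta>) \<bullet> (S *v (\<theta> - \<beta>)) = \<theta> \<bullet> (S *v \<theta>) - 2 * (\<theta> \<bullet> (S *v \<beta>)) + \<beta> \<bullet> (S *v \<beta>)"
    if "transpose S = S" for S :: "real^'d^'d" and \<theta> \<beta>
    using inner_matrix_vector_transpose[of S \<beta> \<theta>] that
    by (simp add: inner_diff_left inner_diff_right matrix_vector_mult_diff_distrib inner_commute)
  define C where "C = l1 * (\<beta>1 \<bullet> (S1 *v \<beta>1)) + l2 * (\<beta>2 \<bullet> (S2 *v \<beta>2))"
  have "F \<theta> = real CARD('n) * (\<theta> \<bullet> ((l1 *\<^sub>R S1 + l2 *\<^sub>R S2) *v \<theta>)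
      - 2 * (\<theta> \<bullet> (l1 *\<^sub>R (S1 *v \<beta>1) + l2 *\<^sub>R (S2 *v \<beta>2))) + C)" for \<theta>
    unfolding F_def power2_norm_matrix_vector_sample_cov S1_def[symmetric] S2_def[symmetric]
    using quad[of S1 \<theta> \<beta>1] quad[of S2 \<theta> \<beta>2]
    by (simp add: C_def S1_def S2_def transpose_sample_cov matrix_vector_mult_add_rdistrib
        inner_add_right algebra_simps flip: scaleR_matrix_vector_assoc)
  then have Q: "F \<theta> = real CARD('n) * (\<theta> \<bullet> \<theta> - 2 * (\<theta> \<bullet> v) + C)" for \<theta>
    using assms by (simp add: S1_def S2_def C_def)
  show ?thesis
    unfolding Q[of \<theta>] Q[of v]
    by (simp add: power2_norm_eq_inner inner_diff_left inner_diff_right inner_commute algebra_simps)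
qed

lemma argmin_pooled_least_squares:
  fixes X1 X2 :: "real^'d^'n"
  assumes "l1 *\<^sub>R sample_cov X1 + l2 *\<^sub>R sample_cov X2 = mat 1"
    and "l1 *\<^sub>R (sample_cov X1 *v \<beta>1) + l2 *\<^sub>R (sample_cov X2 *v \<beta>2) = v"
  shows "argmin_set (\<lambda>\<theta>. l1 * (norm (X1 *v (\<theta> - \<beta>1)))\<^sup>2
                        + l2 * (norm (X2 *v (\<theta> - \<beta>2)))\<^sup>2) = {v}"
    (is "argmin_set ?F = _")
proof -
  have F: "?F \<theta> = ?F v + real CARD('n) * (norm (\<theta> - v))\<^sup>2" for \<theta>
    using pooled_least_squares_expansion[OF assms] .
  have "(\<forall>\<theta>. ?F x \<le> ?F \<theta>) \<longleftrightarrow> x = v" for x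
  proof
    assume "\<forall>\<theta>. ?F x \<le> ?F \<theta>"
    then have "real CARD('n) * (norm (x - v))\<^sup>2 \<le> 0"
      using F[of x] by (metis add_le_same_cancel1 spec)
    then show "x = v" by (simp add: mult_le_0_iff)
  next
    show "x = v \<Longrightarrow> \<forall>\<theta>. ?F x \<le> ?F \<theta>"
      using F by (metis le_add_same_cancel1 of_nat_0_le_iff zero_le_mult_iff zero_le_power2)
  qed
  then show ?thesis
    unfolding argmin_set_def by blast
qed

definition rank_one :: "real^'d \<Rightarrow> real^'d^'d" where
  "rank_one u = (\<chi> i j. u $ i * u $ j)"

lemma rank_one_mult_vec: "rank_one u *v x = (u \<bullet> x) *\<^sub>R u"
  by (simp add: rank_one_def vec_eq_iff matrix_vector_mult_def inner_vec_def sum_distrib_left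
      algebra_simps)

lemma rank_one_perturbation_mult_vec:
  "(mat 1 + a *\<^sub>R rank_one u) *v x = x + (a * (u \<bullet> x)) *\<^sub>R u"
  by (simp add: matrix_vector_mult_add_rdistrib rank_one_mult_vec flip: scaleR_matrix_vector_assoc)

lemma transpose_rank_one_perturbation:
  "transpose (mat 1 + a *\<^sub>R rank_one u) = mat 1 + a *\<^sub>R rank_one u"
  by (simp add: rank_one_def transpose_def mat_def vec_eq_iff mult.commute)

lemma transpose_mult_rank_one_perturbation:
  "transpose (mat 1 + \<mu> *\<^sub>R rank_one u) ** (mat 1 + \<mu> *\<^sub>R rank_one u)
     = mat 1 + (2 * \<mu> + \<mu>\<^sup>2 * (u \<bullet> u)) *\<^sub>R rank_one u"
  unfolding transpose_rank_one_perturbation matrix_eq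
proof
  fix x
  have coeff: "\<mu> * (u \<bullet> x) + \<mu> * (u \<bullet> x + \<mu> * (u \<bullet> x) * (u \<bullet> u))
      = (2 * \<mu> + \<mu>\<^sup>2 * (u \<bullet> u)) * (u \<bullet> x)"
    by (simp add: power2_eq_square algebra_simps)
  have "(mat 1 + \<mu> *\<^sub>R rank_one u) *v ((mat 1 + \<mu> *\<^sub>R rank_one u) *v x)
      = x + (\<mu> * (u \<bullet> x) + \<mu> * (u \<bullet> x + \<mu> * (u \<bullet> x) * (u \<bullet> u))) *\<^sub>R u"
    by (simp add: rank_one_perturbation_mult_vec inner_add_right scaleR_left_distrib add.assoc)
  then show "(mat 1 + \<mu> *\<^sub>R rank_one u) ** (mat 1 + \<mu> *\<^sub>R rank_one u) *v x
      = (mat 1 + (2 * \<mu> + \<mu>\<^sup>2 * (u \<bullet> u)) *\<^sub>R rank_one u) *v x"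
    by (simp add: coeff rank_one_perturbation_mult_vec flip: matrix_vector_mul_assoc)
qed

lemma exists_sqrt_rank_one_perturbation:
  fixes u :: "real^'d"
  assumes "u \<noteq> 0" and "0 \<le> 1 + a * (u \<bullet> u)"
  shows "\<exists>M :: real^'d^'d. transpose M ** M = mat 1 + a *\<^sub>R rank_one u"
proof -
  define N where "N = u \<bullet> u"
  have "N > 0" using assms(1) by (simp add: N_def)
  define \<mu> where "\<mu> = (sqrt (1 + a * N) - 1) / N"
  have "2 * \<mu> + \<mu>\<^sup>2 * N = ((sqrt (1 + a * N))\<^sup>2 - 1) / N"
    using \<open>N > 0\<close> by (simp add: \<mu>_def field_simps power2_eq_square)
  also have "\<dots> = a"
    using \<open>N > 0\<close> assms(2) by (simp add: N_def)
  finally have "2 * \<mu> + \<mu>\<^sup>2 * (u \<bullet> u) = a"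
    by (simp add: N_def)
  then have "transpose (mat 1 + \<mu> *\<^sub>R rank_one u) ** (mat 1 + \<mu> *\<^sub>R rank_one u)
      = mat 1 + a *\<^sub>R rank_one u"
    by (simp add: transpose_mult_rank_one_perturbation)
  then show ?thesis by blast
qed

lemma rank_one_perturbation_quadratic_form:
  "x \<bullet> ((mat 1 + a *\<^sub>R rank_one u) *v x) = x \<bullet> x + a * (u \<bullet> x)\<^sup>2"
  by (simp add: rank_one_perturbation_mult_vec inner_add_right power2_eq_square inner_commute)

lemma rank_one_quadratic_form_bounds:
  fixes u x :: "'a::real_inner"
  shows "min 1 (1 + a * (u \<bullet> u)) * (x \<bullet> x) \<le> x \<bullet> x + a * (u \<bullet> x)\<^sup>2"
    and "x \<bullet> x + a * (u \<bullet> x)\<^sup>2 \<le> max 1 (1 + a * (u \<bullet> u)) * (x \<bullet> x)"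
proof -
  have cs: "(u \<bullet> x)\<^sup>2 \<le> (u \<bullet> u) * (x \<bullet> x)" by (rule Cauchy_Schwarz_ineq)
  have "0 \<le> x \<bullet> x" by simp
  show "min 1 (1 + a * (u \<bullet> u)) * (x \<bullet> x) \<le> x \<bullet> x + a * (u \<bullet> x)\<^sup>2"
  proof (cases "0 \<le> a")
    case True
    have "min 1 (1 + a * (u \<bullet> u)) * (x \<bullet> x) \<le> 1 * (x \<bullet> x)"
      using \<open>0 \<le> x \<bullet> x\<close> by (intro mult_right_mono) simp_all
    then show ?thesis using True by simp
  next
    case False
    then have "a * ((u \<bullet> u) * (x \<bullet> x)) \<le> a * (u \<bullet> x)\<^sup>2"
      using cs by (simp add: mult_left_mono_neg)
    moreover have "min 1 (1 + a * (u \<bullet> u)) * (x \<bullet> x) \<le> (1 + a * (u \<bullet> u)) * (x \<bullet> x)"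
      using \<open>0 \<le> x \<bullet> x\<close> by (intro mult_right_mono) simp_all
    ultimately show ?thesis by (simp add: algebra_simps)
  qed
  show "x \<bullet> x + a * (u \<bullet> x)\<^sup>2 \<le> max 1 (1 + a * (u \<bullet> u)) * (x \<bullet> x)"
  proof (cases "0 \<le> a")
    case True
    then have "a * (u \<bullet> x)\<^sup>2 \<le> a * ((u \<bullet> u) * (x \<bullet> x))"
      using cs by (simp add: mult_left_mono)
    moreover have "(1 + a * (u \<bullet> u)) * (x \<bullet> x) \<le> max 1 (1 + a * (u \<bullet> u)) * (x \<bullet> x)"
      using \<open>0 \<le> x \<bullet> x\<close> by (intro mult_right_mono) simp_all
    ultimately show ?thesis by (simp add: algebra_simps)
  next
    case False
    have "1 * (x \<bullet> x) \<le> max 1 (1 + a * (u \<bullet> u)) * (x \<bullet> x)"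
      using \<open>0 \<le> x \<bullet> x\<close> by (intro mult_right_mono) simp_all
    then show ?thesis using False by (simp add: mult_nonpos_nonneg)
  qed
qed

lemma design_class_if_rank_one_perturbation:
  fixes X :: "real^'d^'n"
  assumes "sample_cov X = mat 1 + a *\<^sub>R rank_one u" and "1 \<le> \<gamma>"
    and "1 / \<gamma> \<le> 1 + a * (u \<bullet> u)" and "1 + a * (u \<bullet> u) \<le> \<gamma>"
  shows "X \<in> design_class \<gamma>"
proof -
  have scaled_id: "x \<bullet> ((c *\<^sub>R mat 1) *v x) = c * (x \<bullet> x)" for c and x :: "real^'d"
    by (simp flip: scaleR_matrix_vector_assoc)
  have bounds: "1 / \<gamma> \<le> min 1 (1 + a * (u \<bullet> u))" "max 1 (1 + a * (u \<bullet> u)) \<le> \<gamma>"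
    using assms(2-4) by auto
  have "1 / \<gamma> * (x \<bullet> x) \<le> x \<bullet> x + a * (u \<bullet> x)\<^sup>2 \<and> x \<bullet> x + a * (u \<bullet> x)\<^sup>2 \<le> \<gamma> * (x \<bullet> x)"
    for x :: "real^'d"
  proof
    have "1 / \<gamma> * (x \<bullet> x) \<le> min 1 (1 + a * (u \<bullet> u)) * (x \<bullet> x)"
      using bounds(1) by (rule mult_right_mono) simp
    then show "1 / \<gamma> * (x \<bullet> x) \<le> x \<bullet> x + a * (u \<bullet> x)\<^sup>2"
      using rank_one_quadratic_form_bounds(1) by (rule order.trans)
    have "max 1 (1 + a * (u \<bullet> u)) * (x \<bullet> x) \<le> \<gamma> * (x \<bullet> x)"
      using bounds(2) by (rule mult_right_mono) simp
    with rank_one_quadratic_form_bounds(2) show "x \<bullet> x + a * (u \<bullet> x)\<^sup>2 \<le> \<gamma> * (x \<bullet> x)"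
      by (rule order.trans)
  qed
  then show ?thesis
    by (simp add: design_class_def loewner_le_def scaled_id assms(1)
        rank_one_perturbation_quadratic_form)
qed

lemma exists_isometric_embedding:
  assumes "CARD('d) \<le> CARD('n)"
  shows "\<exists>R :: real^'d^'n. transpose R ** R = mat 1"
proof -
  obtain f :: "'d \<Rightarrow> 'n" where "inj f"
    using card_le_inj[of "UNIV :: 'd set" "UNIV :: 'n set"] assms by auto
  define R :: "real^'d^'n" where "R = (\<chi> i j. axis (f j) 1 $ i)"
  have "column j R \<bullet> column k R = (if f j = f k then 1 else 0)" for j k
    by (simp add: R_def column_def inner_axis_axis)
  then have "transpose R ** R = (\<chi> j k. if f j = f k then 1 else 0)"
    by (simp add: matrix_mult_transpose_dot_column)
  then have "transpose R ** R = mat 1"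
    using \<open>inj f\<close> by (simp add: mat_def inj_eq)
  then show ?thesis by blast
qed

lemma sample_cov_scaled_isometric_embedding:
  fixes R :: "real^'d^'n"
  assumes "transpose R ** R = mat 1"
  shows "sample_cov (sqrt (real CARD('n)) *\<^sub>R (R ** M)) = transpose M ** M"
proof -
  have "transpose (R ** M) ** (R ** M) = transpose M ** ((transpose R ** R) ** M)"
    by (simp add: matrix_transpose_mul matrix_mul_assoc)
  also have "\<dots> = transpose M ** M"
    by (simp add: assms)
  finally have "transpose (R ** M) ** (R ** M) = transpose M ** M" .
  then show ?thesis
    by (simp add: sample_cov_def transpose_scalar matrix_scalar_ac flip: scalar_matrix_assoc)
qed

lemma exists_design_with_rank_one_perturbed_cov:
  fixes u :: "real^'d"
  assumes "CARD('d) \<le> CARD('n)" and "u \<noteq> 0" and "1 \<le> \<gamma>"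
    and "1 / \<gamma> \<le> 1 + a * (u \<bullet> u)" and "1 + a * (u \<bullet> u) \<le> \<gamma>"
  shows "\<exists>X :: real^'d^'n. X \<in> design_class \<gamma> \<and> sample_cov X = mat 1 + a *\<^sub>R rank_one u"
proof -
  have "0 < 1 / \<gamma>" using assms(3) by simp
  then have "0 \<le> 1 + a * (u \<bullet> u)" using assms(4) by linarith
  then obtain M :: "real^'d^'d" where M: "transpose M ** M = mat 1 + a *\<^sub>R rank_one u"
    using exists_sqrt_rank_one_perturbation[OF assms(2)] by blast
  obtain R :: "real^'d^'n" where "transpose R ** R = mat 1"
    using exists_isometric_embedding[OF assms(1)] by blast
  then have cov: "sample_cov (sqrt (real CARD('n)) *\<^sub>R (R ** M)) = mat 1 + a *\<^sub>R rank_one u"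
    by (simp add: sample_cov_scaled_isometric_embedding M)
  moreover have "sqrt (real CARD('n)) *\<^sub>R (R ** M) \<in> design_class \<gamma>"
    using cov assms(3-5) by (rule design_class_if_rank_one_perturbation)
  ultimately show ?thesis by (intro exI conjI)
qed

lemma pooled_rank_one_perturbation:
  assumes "l1 + l2 = 1" and "l1 * a1 + l2 * a2 = 0"
  shows "l1 *\<^sub>R (mat 1 + a1 *\<^sub>R rank_one u) + l2 *\<^sub>R (mat 1 + a2 *\<^sub>R rank_one u) = mat 1"
proof -
  have "l1 *\<^sub>R (mat 1 + a1 *\<^sub>R rank_one u) + l2 *\<^sub>R (mat 1 + a2 *\<^sub>R rank_one u)
      = (l1 + l2) *\<^sub>R mat 1 + (l1 * a1 + l2 * a2) *\<^sub>R rank_one u"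
    by (simp add: algebra_simps)
  then show ?thesis using assms by simp
qed

lemma exists_pooled_moment_rank_one_perturbation:
  fixes u e :: "real^'d"
  assumes "l1 + l2 = 1" and "l1 * a1 + l2 * a2 = 0" and "l1 * a1 \<noteq> 0" and "u \<bullet> e = 1"
  shows "\<exists>b c. l1 *\<^sub>R ((mat 1 + a1 *\<^sub>R rank_one u) *v (b *\<^sub>R e))
                + l2 *\<^sub>R ((mat 1 + a2 *\<^sub>R rank_one u) *v (c *\<^sub>R e)) = t *\<^sub>R e + u"
proof -
  define c where "c = t - 1 / a1"
  define b where "b = c + 1 / (l1 * a1)"
  have "l1 * a1 * (b - c) = 1"
    using assms(3) by (simp add: b_def)
  have "l2 * a2 = - (l1 * a1)" using assms(2) by linarith
  then have "l1 * a1 * b + l2 * a2 * c = 1"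
    using \<open>l1 * a1 * (b - c) = 1\<close> by (simp add: right_diff_distrib)
  moreover have "l1 * b + l2 * c = t"
  proof -
    have "l1 * b + l2 * c = (l1 + l2) * c + l1 * (b - c)"
      by (simp add: algebra_simps)
    then show ?thesis
      using assms(1,3) by (simp add: b_def c_def)
  qed
  moreover have "l1 *\<^sub>R ((mat 1 + a1 *\<^sub>R rank_one u) *v (b *\<^sub>R e))
           + l2 *\<^sub>R ((mat 1 + a2 *\<^sub>R rank_one u) *v (c *\<^sub>R e))
      = (l1 * b + l2 * c) *\<^sub>R e + (l1 * a1 * b + l2 * a2 * c) *\<^sub>R u"
    unfolding rank_one_perturbation_mult_vec by (simp add: assms(4) algebra_simps)
  ultimately show ?thesis by auto
qed

text \<open>With \<open>s = 1 - 1/\<gamma>\<close> the two perturbations give \<open>1 + a\<^sub>1\<parallel>u\<parallel>\<^sup>2 = 1 + \<lambda>\<^sub>2 s\<close> and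
  \<open>1 + a\<^sub>2\<parallel>u\<parallel>\<^sup>2 = 1 - \<lambda>\<^sub>1 s\<close>, both in \<open>[1/\<gamma>, \<gamma>]\<close>.\<close>

lemma exists_designs_with_balanced_rank_one_covs:
  fixes u :: "real^'d"
  assumes "CARD('d) \<le> CARD('n)" and "1 < \<gamma>" and "0 < l1" and "0 < l2" and "l1 + l2 = 1"
    and "u \<noteq> 0"
  shows "\<exists>(X1 :: real^'d^'n) (X2 :: real^'d^'n) a1 a2.
           X1 \<in> design_class \<gamma> \<and> X2 \<in> design_class \<gamma> \<and>
           sample_cov X1 = mat 1 + a1 *\<^sub>R rank_one u \<and>
           sample_cov X2 = mat 1 + a2 *\<^sub>R rank_one u \<and>
           l1 * a1 + l2 * a2 = 0 \<and> a1 \<noteq> 0"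
proof -
  define s where "s = (\<gamma> - 1) / \<gamma>"
  have "(\<gamma> - 1) * 1 \<le> (\<gamma> - 1) * \<gamma>"
    using assms(2) by (intro mult_left_mono) simp_all
  then have s: "0 < s" "s \<le> \<gamma> - 1" "1 - s = 1 / \<gamma>" "1 / \<gamma> \<le> 1"
    using assms(2) by (auto simp: s_def field_simps)
  define a1 a2 where "a1 = l2 * s / (u \<bullet> u)" and "a2 = - (l1 * s / (u \<bullet> u))"
  have a1: "a1 * (u \<bullet> u) = l2 * s" and a2: "a2 * (u \<bullet> u) = - (l1 * s)"
    using assms(6) by (simp_all add: a1_def a2_def)
  have "0 < l1 * s" "0 < l2 * s" "l1 * s \<le> s" "l2 * s \<le> s"
    using assms(3-5) s(1) by (simp_all add: mult_le_cancel_right1)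
  then have "1 / \<gamma> \<le> 1 + a1 * (u \<bullet> u)" "1 + a1 * (u \<bullet> u) \<le> \<gamma>"
    and "1 / \<gamma> \<le> 1 + a2 * (u \<bullet> u)" "1 + a2 * (u \<bullet> u) \<le> \<gamma>"
    and "a1 \<noteq> 0"
    unfolding a1 a2 using s assms(2) a1 by (linarith, linarith, linarith, linarith, force)
  moreover have "l1 * a1 + l2 * a2 = 0" by (simp add: a1_def a2_def)
  ultimately show ?thesis
    using exists_design_with_rank_one_perturbed_cov[OF assms(1,6)] assms(2)
    by (meson less_imp_le)
qed

theorem claimD1:
  fixes \<gamma> l1 l2 :: real and v :: "real^'d"
  assumes "CARD('d) \<le> CARD('n)"
    and "\<gamma> > 1"
    and "l1 > 0" and "l2 > 0" and "l1 + l2 = 1"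
    and "norm v \<le> 1"
  shows "\<exists>(X1::real^'d^'n) (X2::real^'d^'n) \<beta>1 \<beta>2.
           X1 \<in> design_class \<gamma> \<and> X2 \<in> design_class \<gamma> \<and>
           one_sparse \<beta>1 \<and> one_sparse \<beta>2 \<and>
           l1 *\<^sub>R sample_cov X1 + l2 *\<^sub>R sample_cov X2 = mat 1 \<and>
           l1 *\<^sub>R (sample_cov X1 *v \<beta>1) + l2 *\<^sub>R (sample_cov X2 *v \<beta>2) = v \<and>
           argmin_set (\<lambda>\<theta>. l1 * (norm (X1 *v (\<theta> - \<beta>1)))\<^sup>2
                           + l2 * (norm (X2 *v (\<theta> - \<beta>2)))\<^sup>2) = {v}"
proof -
  obtain i :: 'd where True by simp
  define e where "e = axis i (1::real)"
  define u where "u = v - (v $ i - 1) *\<^sub>R e"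
  have "u \<bullet> e = 1" by (simp add: u_def e_def inner_axis inner_diff_left)
  then have "u \<noteq> 0" by auto
  obtain X1 X2 :: "real^'d^'n" and a1 a2
    where X: "X1 \<in> design_class \<gamma>" "X2 \<in> design_class \<gamma>"
      and cov: "sample_cov X1 = mat 1 + a1 *\<^sub>R rank_one u" "sample_cov X2 = mat 1 + a2 *\<^sub>R rank_one u"
      and balanced: "l1 * a1 + l2 * a2 = 0" and "a1 \<noteq> 0"
    using exists_designs_with_balanced_rank_one_covs[OF assms(1-5) \<open>u \<noteq> 0\<close>] by blast
  then have "l1 * a1 \<noteq> 0" using assms(3) by simp
  then obtain b c where "l1 *\<^sub>R (sample_cov X1 *v (b *\<^sub>R e)) + l2 *\<^sub>R (sample_cov X2 *v (c *\<^sub>R e)) = v"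
    using exists_pooled_moment_rank_one_perturbation[OF assms(5) balanced _ \<open>u \<bullet> e = 1\<close>, of "v $ i - 1"]
    unfolding cov by (auto simp: u_def)
  moreover have "l1 *\<^sub>R sample_cov X1 + l2 *\<^sub>R sample_cov X2 = mat 1"
    unfolding cov using assms(5) balanced by (rule pooled_rank_one_perturbation)
  ultimately show ?thesis
    using X argmin_pooled_least_squares one_sparse_scaleR_axis
    unfolding e_def by blast
qed

end
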